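(* Let $n\ge1$, $k>0$ and $P\in\mathscr P_n$. Then for all $\alpha,\beta\in\mathbb C$ with $|\alpha|\le1$, $|\beta|\le1$, all $R>r\ge k$ and all $|z|=1$, $$\big|B[P\circ\sigma](z)+\Phi_k(R,r,\alpha,\beta)B[P\circ\rho](z)\big|\le\frac{1}{k^n}\big|R^n+r^n\Phi_k(R,r,\alpha,\beta)\big|\,|B[z^n]|\,\max_{|z|=k}|P(z)|.$$ Equality holds for $P(z)=az^n$, $a\ne0$.
   Context: For an integer $n\ge1$, $\mathscr P_n$ denotes the set of complex polynomials of degree at most $n$. Fix complex numbers $\lambda_0,\lambda_1,\lambda_2$ such that all zeros of $U(z)=\lambda_0+n\lambda_1 z+\frac{n(n-1)}{2}\lambda_2 z^2$ lie in the half-plane $\{z\in\mathbb C:|z|\le|z-n/2|\}$. The operator $B$ (of the class $\mathcal B_n$) sends $P\in\mathscr P_n$ to $B[P](z)=\lambda_0P(z)+\lambda_1\frac{nz}{2}P'(z)+\lambda_2\left(\frac{nz}{2}\right)^2\frac{P''(z)}{2!}$. For a polynomial $P$ and a map $\rho$, $P\circ\rho$ denotes $z\mapsto P(\rho(z))$, and $B[P\circ\rho](z)$ is $B$ applied to the polynomial $P\circ\rho$, evaluated at $z$. $B[z^n]$ denotes $B$ applied to the monomial $z\mapsto z^n$, evaluated at the point $z$ under consideration; thus $|B[z^n]|=|z|^n\,|\lambda_0+\lambda_1 n^2/2+\lambda_2 n^3(n-1)/8|$. For $k>0$, $R,r>0$ and $\alpha,\beta\in\mathbb C$: $\Phi_k(R,r,\alpha,\beta)=\beta\left\{\left(\frac{R+k}{k+r}\right)^n-|\alpha|\right\}-\alpha$;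 and $\sigma(z)=Rz$, $\rho(z)=rz$. *)

theory Defs
  imports "HOL-Analysis.Analysis" "HOL-Computational_Algebra.Polynomial"
begin

definition Bop :: "nat \<Rightarrow> complex \<Rightarrow> complex \<Rightarrow> complex \<Rightarrow> complex poly \<Rightarrow> complex \<Rightarrow> complex" where
  "Bop n l0 l1 l2 P z =
     l0 * poly P z
     + l1 * (of_nat n * z / 2) * poly (pderiv P) z
     + l2 * (of_nat n * z / 2)^2 * poly (pderiv (pderiv P)) z / 2"

definition Upoly :: "nat \<Rightarrow> complex \<Rightarrow> complex \<Rightarrow> complex \<Rightarrow> complex \<Rightarrow> complex" where
  "Upoly n l0 l1 l2 z = l0 + of_nat n * l1 * z + (of_nat n * (of_nat n - 1) / 2) * l2 * z^2"

definition Phi :: "nat \<Rightarrow> real \<Rightarrow> real \<Rightarrow> real \<Rightarrow> complex \<Rightarrow> complex \<Rightarrow> complex" where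
  "Phi n k R r \<alpha> \<beta> = \<beta> * complex_of_real (((R + k) / (k + r))^n - cmod \<alpha>) - \<alpha>"

end

(*
  For a polynomial G of degree n with all zeros a_j in the open unit disc and |z| >= 1,
  B[G](z) = G(z) (l0 + l1 (n/2) e1(w) + l2 (n^2/4) e2(w)) with w_j = z/(z - a_j), and every
  w_j lies in the half-plane Re w > 1/2. On the diagonal w_1 = ... = w_n = x this symmetric
  form is U(n x/2), which has no zeros there; a Walsh-type coincidence argument, whose
  induction steps are Laguerre's theorem on polar derivatives, shows that the form has no
  zeros on the whole product of half-planes. Hence B[G](z) <> 0.

  Write T[Q] = B[Q o sigma](z) + Phi B[Q o rho](z). If the inequality failed, then
  mu = T[P] / T[z^n] satisfies |mu| k^n > max_{|w|=k} |P(w)|, so by the maximum modulus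
  principle (applied to the reversed polynomial) F = P - mu z^n has degree n and all its zeros
  in |w| < k. Each linear factor satisfies |r x - a| (R+k) < |R x - a| (k+r) for |x| >= 1, and
  |Phi| <= ((R+k)/(k+r))^n, so F o sigma + Phi F o rho has degree n and no zeros in |x| >= 1.
  Thus T[F] <> 0, although T[F] = T[P] - mu T[z^n] = 0 by linearity.
*)

theory Submission
  imports
    Defs
    "HOL-Computational_Algebra.Fundamental_Theorem_Algebra"
    "HOL-Complex_Analysis.Conformal_Mappings"
begin

section \<open>Linear factors and logarithmic derivatives\<close>

fun esym2 :: "'a::comm_semiring_0 list \<Rightarrow> 'a" where
  "esym2 [] = 0"
| "esym2 (w # ws) = w * sum_list ws + esym2 ws"

lemma esym2_map_mult:
  fixes c :: "'a::comm_semiring_1"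
  shows "esym2 (map (\<lambda>x. c * f x) xs) = c\<^sup>2 * esym2 (map f xs)"
  by (induction xs) (simp_all add: sum_list_const_mult, simp add: power2_eq_square algebra_simps)

lemma esym2_replicate:
  "esym2 (replicate m (x::'a::field_char_0)) = of_nat m * (of_nat m - 1) / 2 * x\<^sup>2"
  by (induction m) (simp_all add: sum_list_replicate power2_eq_square field_simps)

lemma complex_poly_factor_list:
  fixes p :: "complex poly"
  assumes "p \<noteq> 0"
  obtains zs where "length zs = degree p" "p = smult (lead_coeff p) (\<Prod>a\<leftarrow>zs. [:-a, 1:])"
    "\<And>a. a \<in> set zs \<Longrightarrow> poly p a = 0"
proof -
  obtain zs where zs: "mset zs = proots p" using ex_mset by blast
  have "p = smult (lead_coeff p) (\<Prod>a\<in>#proots p. [:-a, 1:])"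
    by (rule complex_poly_decompose_multiset [symmetric])
  also have "(\<Prod>a\<in>#proots p. [:-a, 1:]) = (\<Prod>a\<leftarrow>zs. [:-a, 1:])"
    by (simp flip: zs prod_mset_prod_list)
  finally have "p = smult (lead_coeff p) (\<Prod>a\<leftarrow>zs. [:-a, 1:])" .
  moreover have "length zs = degree p"
    by (metis size_mset size_proots_complex zs)
  moreover have "poly p a = 0" if "a \<in> set zs" for a
  proof -
    have "a \<in># proots p" using that by (simp flip: zs)
    then show ?thesis using assms by simp
  qed
  ultimately show ?thesis using that by blast
qed

lemma pderiv_linear_factor_mult:
  fixes p :: "'a::idom poly"
  shows "pderiv ([:-a, 1:] * p) = [:-a, 1:] * pderiv p + p"
  by (subst pderiv_mult) (simp add: pderiv_pCons)

lemma poly_pderiv_linear_factor_mult: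
  fixes p :: "'a::idom poly"
  shows "poly (pderiv ([:-a, 1:] * p)) z = (z - a) * poly (pderiv p) z + poly p z"
  by (simp only: pderiv_linear_factor_mult poly_add poly_mult) (simp add: algebra_simps)

lemma poly_pderiv_prod_linear:
  fixes zs :: "'a::field list"
  assumes "\<And>a. a \<in> set zs \<Longrightarrow> a \<noteq> z"
  shows "poly (pderiv (\<Prod>a\<leftarrow>zs. [:-a, 1:])) z
    = poly (\<Prod>a\<leftarrow>zs. [:-a, 1:]) z * (\<Sum>a\<leftarrow>zs. inverse (z - a))"
  using assms
proof (induction zs)
  case (Cons a zs)
  define g where "g = poly (\<Prod>a\<leftarrow>zs. [:-a, 1:]) z"
  have "z - a \<noteq> 0" using Cons.prems by auto
  moreover have "poly (pderiv (\<Prod>a\<leftarrow>zs. [:-a, 1:])) z = g * (\<Sum>a\<leftarrow>zs. inverse (z - a))"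
    using Cons by (simp add: g_def)
  ultimately show ?case
    by (simp only: list.map prod_list.Cons sum_list.Cons poly_pderiv_linear_factor_mult)
      (simp add: g_def field_simps)
qed simp

lemma poly_pderiv2_prod_linear:
  fixes zs :: "'a::field list"
  assumes "\<And>a. a \<in> set zs \<Longrightarrow> a \<noteq> z"
  shows "poly (pderiv (pderiv (\<Prod>a\<leftarrow>zs. [:-a, 1:]))) z
    = 2 * poly (\<Prod>a\<leftarrow>zs. [:-a, 1:]) z * esym2 (map (\<lambda>a. inverse (z - a)) zs)"
  using assms
proof (induction zs)
  case (Cons a zs)
  define p where "p = (\<Prod>a\<leftarrow>zs. [:-a, 1:])"
  define E1 where "E1 = (\<Sum>a\<leftarrow>zs. inverse (z - a))"
  define E2 where "E2 = esym2 (map (\<lambda>a. inverse (z - a)) zs)"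
  have "z - a \<noteq> 0" using Cons.prems by auto
  have D1: "poly (pderiv p) z = poly p z * E1"
    using Cons.prems poly_pderiv_prod_linear[of zs z] by (simp add: p_def E1_def)
  have D2: "poly (pderiv (pderiv p)) z = 2 * poly p z * E2"
    using Cons by (simp add: p_def E2_def)
  have "pderiv (pderiv ([:-a, 1:] * p)) = [:-a, 1:] * pderiv (pderiv p) + pderiv p + pderiv p"
    by (simp only: pderiv_linear_factor_mult pderiv_add)
  then have "poly (pderiv (pderiv ([:-a, 1:] * p))) z = (z - a) * (2 * poly p z * E2) + 2 * (poly p z * E1)"
    by (simp only: poly_add poly_mult D1 D2) (simp add: algebra_simps)
  also have "\<dots> = 2 * ((z - a) * poly p z) * (inverse (z - a) * E1 + E2)"
    using \<open>z - a \<noteq> 0\<close> by (simp add: field_simps)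
  also have "(z - a) * poly p z = poly (\<Prod>a\<leftarrow>a # zs. [:-a, 1:]) z"
    by (simp add: p_def algebra_simps)
  finally show ?case by (simp add: p_def E1_def E2_def)
qed simp

section \<open>Laguerre's theorem for a half-plane\<close>

lemma Re_inverse_ge_iff:
  fixes a :: complex
  assumes "a \<noteq> 0"
  shows "d * (cmod (inverse a))\<^sup>2 \<le> Re (inverse a) \<longleftrightarrow> d \<le> Re a"
proof -
  have pos: "0 < (cmod a)\<^sup>2" using assms by simp
  have re: "Re (inverse a) = Re a / (cmod a)\<^sup>2" by (simp add: cmod_power2)
  have norm: "(cmod (inverse a))\<^sup>2 = 1 / (cmod a)\<^sup>2" by (simp add: norm_inverse power_inverse divide_inverse)
  show ?thesis unfolding re norm using pos by (simp add: divide_le_cancel)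
qed

lemma norm_sum_sq_le_card_Re_sum:
  fixes v :: "'i \<Rightarrow> complex"
  assumes "0 \<le> d" and disc: "\<And>i. i \<in> I \<Longrightarrow> d * (cmod (v i))\<^sup>2 \<le> Re (v i)"
  shows "d * (cmod (sum v I))\<^sup>2 \<le> card I * Re (sum v I)"
proof -
  have "(cmod (sum v I))\<^sup>2 \<le> (\<Sum>i\<in>I. cmod (v i))\<^sup>2"
    by (intro power_mono norm_sum) simp
  also have "\<dots> \<le> (\<Sum>i\<in>I. (cmod (v i))\<^sup>2) * card I"
    by (rule sum_squared_le_sum_of_squares)
  finally have "d * (cmod (sum v I))\<^sup>2 \<le> d * ((\<Sum>i\<in>I. (cmod (v i))\<^sup>2) * card I)"
    using \<open>0 \<le> d\<close> by (rule mult_left_mono)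
  also have "\<dots> = (\<Sum>i\<in>I. d * (cmod (v i))\<^sup>2) * card I"
    by (simp add: sum_distrib_left mult.assoc)
  also have "\<dots> \<le> (\<Sum>i\<in>I. Re (v i)) * card I"
    using disc by (intro mult_right_mono sum_mono) auto
  finally show ?thesis by (simp add: Re_sum mult.commute)
qed

text \<open>Inversion maps the half-plane \<open>Re \<ge> d\<close> onto the disc \<open>d |v|\<^sup>2 \<le> Re v\<close>, which is
  convex and contains \<open>0\<close>.\<close>

lemma Re_ge_of_inverse_mean:
  fixes u :: "'i \<Rightarrow> complex"
  assumes "0 < d" and half_plane: "\<And>i. i \<in> I \<Longrightarrow> d \<le> Re (u i)"
    and "card I \<le> N" and "0 < N" and "e \<noteq> 0"
    and mean: "inverse e = (\<Sum>i\<in>I. inverse (u i)) / of_nat N"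
  shows "d \<le> Re e"
proof -
  define S where "S = (\<Sum>i\<in>I. inverse (u i))"
  have disc: "d * (cmod (inverse (u i)))\<^sup>2 \<le> Re (inverse (u i))" if "i \<in> I" for i
  proof -
    have "u i \<noteq> 0" using half_plane[OF that] \<open>0 < d\<close> by auto
    then show ?thesis using half_plane[OF that] Re_inverse_ge_iff by blast
  qed
  have "0 \<le> Re S"
    unfolding S_def Re_sum using \<open>0 < d\<close> by (intro sum_nonneg order.trans[OF _ disc]) auto
  have "d * (cmod S)\<^sup>2 \<le> card I * Re S"
    unfolding S_def using \<open>0 < d\<close> disc by (intro norm_sum_sq_le_card_Re_sum) auto
  also have "\<dots> \<le> N * Re S"
    using \<open>card I \<le> N\<close> \<open>0 \<le> Re S\<close> by (intro mult_right_mono) auto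
  finally have "d * (cmod S)\<^sup>2 / (real N)\<^sup>2 \<le> N * Re S / (real N)\<^sup>2"
    by (rule divide_right_mono) simp
  moreover have "d * (cmod (inverse e))\<^sup>2 = d * (cmod S)\<^sup>2 / (real N)\<^sup>2"
    by (simp add: mean S_def norm_divide power_divide)
  moreover have "N * Re S / (real N)\<^sup>2 = Re (inverse e)"
    using \<open>0 < N\<close> by (simp add: mean S_def power2_eq_square)
  ultimately have "d * (cmod (inverse e))\<^sup>2 \<le> Re (inverse e)" by simp
  then show ?thesis using Re_inverse_ge_iff[OF \<open>e \<noteq> 0\<close>] by blast
qed

text \<open>Laguerre: \<open>1 / (\<zeta> - w)\<close> is \<open>1/N\<close> times the sum of the \<open>1 / (\<zeta> - a)\<close> over the roots \<open>a\<close>.\<close>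

lemma polar_derivative_nonzero_half_plane:
  fixes p :: "complex poly"
  assumes deg: "degree p \<le> N" and "0 < N"
    and roots: "\<And>x. poly p x = 0 \<Longrightarrow> Re x \<le> 1/2"
    and w: "1/2 < Re w" and \<zeta>: "1/2 < Re \<zeta>"
  shows "of_nat N * poly p \<zeta> + (w - \<zeta>) * poly (pderiv p) \<zeta> \<noteq> 0"
proof
  assume polar: "of_nat N * poly p \<zeta> + (w - \<zeta>) * poly (pderiv p) \<zeta> = 0"
  have "p \<noteq> 0" using roots[of 1] by auto
  obtain zs where len: "length zs = degree p"
    and p: "p = smult (lead_coeff p) (\<Prod>a\<leftarrow>zs. [:-a, 1:])"
    and zs: "\<And>a. a \<in> set zs \<Longrightarrow> poly p a = 0"
    using complex_poly_factor_list[OF \<open>p \<noteq> 0\<close>] by blast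
  define S where "S = (\<Sum>i<length zs. inverse (\<zeta> - zs ! i))"
  have zs_le: "Re a \<le> 1/2" if "a \<in> set zs" for a using roots zs that by blast
  then have zs_ne: "a \<noteq> \<zeta>" if "a \<in> set zs" for a using that \<zeta> by force
  have "(\<Sum>a\<leftarrow>zs. inverse (\<zeta> - a)) = S"
    by (simp add: S_def sum_list_sum_nth atLeast0LessThan)
  then have "poly (pderiv p) \<zeta> = poly p \<zeta> * S"
    using poly_pderiv_prod_linear[of zs \<zeta>] zs_ne by (subst (1 2) p) (simp add: pderiv_smult)
  then have "(of_nat N - (\<zeta> - w) * S) * poly p \<zeta> = 0"
    using polar by (simp add: algebra_simps)
  moreover have "poly p \<zeta> \<noteq> 0" using roots \<zeta> by force
  ultimately have N_eq: "of_nat N = (\<zeta> - w) * S" by simp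
  then have "\<zeta> - w \<noteq> 0" using \<open>0 < N\<close> by auto
  have mean: "inverse (\<zeta> - w) = S / of_nat N"
    using N_eq \<open>0 < N\<close> \<open>\<zeta> - w \<noteq> 0\<close> by (simp add: field_simps)
  have "Re \<zeta> - 1/2 \<le> Re (\<zeta> - w)"
  proof (rule Re_ge_of_inverse_mean[where u = "\<lambda>i. \<zeta> - zs ! i"])
    show "Re \<zeta> - 1/2 \<le> Re (\<zeta> - zs ! i)" if "i \<in> {..<length zs}" for i
      using that zs_le by simp
  qed (use \<zeta> len deg \<open>0 < N\<close> \<open>\<zeta> - w \<noteq> 0\<close> mean in \<open>auto simp: S_def\<close>)
  then show False using w by simp
qed

text \<open>Walsh's coincidence theorem for the form \<open>A + B e\<^sub>1 + C e\<^sub>2\<close>: replacing one variable \<open>w\<close>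
  at a time, the diagonal quadratic \<open>q\<close> turns into its polar derivative with pole \<open>w\<close>.\<close>

lemma esym2_form_nonzero_half_plane:
  fixes A B C :: complex
  assumes "\<And>x. 1/2 < Re x \<Longrightarrow>
      A + B * sum_list (replicate (length ws) x) + C * esym2 (replicate (length ws) x) \<noteq> 0"
    and "\<And>w. w \<in> set ws \<Longrightarrow> 1/2 < Re w"
  shows "A + B * sum_list ws + C * esym2 ws \<noteq> 0"
  using assms
proof (induction ws arbitrary: A B)
  case Nil
  show ?case using Nil.prems(1)[of 1] by simp
next
  case (Cons w vs)
  define m where "m = length vs"
  define q where "q = [:A, of_nat (Suc m) * B, C * (of_nat (Suc m) * of_nat m / 2):]"
  have q_diag: "poly q x = A + B * sum_list (replicate (Suc m) x) + C * esym2 (replicate (Suc m) x)" for x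
    by (simp add: q_def sum_list_replicate esym2_replicate power2_eq_square field_simps)
  have q_roots: "Re x \<le> 1/2" if "poly q x = 0" for x
    using Cons.prems(1)[of x] that by (force simp: q_diag m_def)
  have q_deg: "degree q \<le> Suc m"
    by (cases m) (auto simp: q_def degree_pCons_le)
  have "A + B * w + (B + C * w) * sum_list (replicate m x) + C * esym2 (replicate m x) \<noteq> 0"
    if x: "1/2 < Re x" for x
  proof -
    have "of_nat (Suc m) * poly q x + (w - x) * poly (pderiv q) x \<noteq> 0"
      using q_deg q_roots Cons.prems(2) x by (intro polar_derivative_nonzero_half_plane) auto
    moreover have "of_nat (Suc m) * poly q x + (w - x) * poly (pderiv q) x
      = of_nat (Suc m) * (A + B * w + (B + C * w) * sum_list (replicate m x) + C * esym2 (replicate m x))"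
      by (simp add: q_def pderiv_pCons sum_list_replicate esym2_replicate power2_eq_square field_simps)
    ultimately show ?thesis by auto
  qed
  then have "(A + B * w) + (B + C * w) * sum_list vs + C * esym2 vs \<noteq> 0"
    using Cons.prems(2) by (intro Cons.IH) (auto simp: m_def)
  then show ?case by (simp add: algebra_simps)
qed

section \<open>Nonvanishing of the operator B\<close>

lemma Bop_add: "Bop n l0 l1 l2 (p + q) z = Bop n l0 l1 l2 p z + Bop n l0 l1 l2 q z"
  by (simp add: Bop_def pderiv_add algebra_simps add_divide_distrib)

lemma Bop_diff: "Bop n l0 l1 l2 (p - q) z = Bop n l0 l1 l2 p z - Bop n l0 l1 l2 q z"
  by (simp add: Bop_def pderiv_diff algebra_simps diff_divide_distrib)

lemma Bop_smult: "Bop n l0 l1 l2 (smult c p) z = c * Bop n l0 l1 l2 p z"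
  by (simp add: Bop_def pderiv_smult algebra_simps)

lemma Bop_prod_linear:
  assumes "\<And>a. a \<in> set zs \<Longrightarrow> a \<noteq> z"
  shows "Bop n l0 l1 l2 (\<Prod>a\<leftarrow>zs. [:-a, 1:]) z
    = poly (\<Prod>a\<leftarrow>zs. [:-a, 1:]) z *
      (l0 + l1 * of_nat n / 2 * sum_list (map (\<lambda>a. z / (z - a)) zs)
          + l2 * of_nat n ^ 2 / 4 * esym2 (map (\<lambda>a. z / (z - a)) zs))"
proof -
  have "sum_list (map (\<lambda>a. z / (z - a)) zs) = z * (\<Sum>a\<leftarrow>zs. inverse (z - a))"
    by (simp add: divide_inverse sum_list_const_mult)
  moreover have "esym2 (map (\<lambda>a. z / (z - a)) zs) = z\<^sup>2 * esym2 (map (\<lambda>a. inverse (z - a)) zs)"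
    using esym2_map_mult[of z "\<lambda>a. inverse (z - a)" zs] by (simp add: divide_inverse)
  ultimately show ?thesis
    using poly_pderiv_prod_linear[OF assms] poly_pderiv2_prod_linear[OF assms]
    by (simp add: Bop_def power2_eq_square field_simps)
qed

lemma norm_le_norm_diff_of_real_iff:
  fixes y :: complex
  assumes "0 < c"
  shows "cmod y \<le> cmod (y - of_real c) \<longleftrightarrow> 2 * Re y \<le> c"
proof -
  have "cmod y \<le> cmod (y - of_real c) \<longleftrightarrow> (cmod y)\<^sup>2 \<le> (cmod (y - of_real c))\<^sup>2"
    by (simp add: power_mono_iff)
  also have "\<dots> \<longleftrightarrow> c * (2 * Re y) \<le> c * c"
    by (simp only: cmod_power2) (simp add: power2_eq_square algebra_simps)
  finally show ?thesis using assms by simp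
qed

lemma Re_div_diff_gt_half:
  fixes z a :: complex
  assumes "cmod a < cmod z"
  shows "1/2 < Re (z / (z - a))"
proof -
  have "z \<noteq> a" using assms by auto
  then have D: "0 < (cmod (z - a))\<^sup>2" by simp
  have "(cmod a)\<^sup>2 < (cmod z)\<^sup>2" using assms by (simp add: power_strict_mono)
  then have "(cmod (z - a))\<^sup>2 < 2 * Re (z * cnj (z - a))"
    by (simp only: cmod_power2) (simp add: power2_eq_square algebra_simps)
  then show ?thesis using D
    by (simp add: Re_divide cmod_power2 field_simps)
qed

lemma Upoly_diagonal_nonzero:
  assumes "1 \<le> n"
    and U: "\<And>z. Upoly n l0 l1 l2 z = 0 \<Longrightarrow> cmod z \<le> cmod (z - of_nat n / 2)"
    and x: "1/2 < Re x"
  shows "l0 + l1 * of_nat n / 2 * sum_list (replicate n x)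
    + l2 * of_nat n ^ 2 / 4 * esym2 (replicate n x) \<noteq> 0"
proof
  define y where "y = of_nat n * x / 2"
  assume "l0 + l1 * of_nat n / 2 * sum_list (replicate n x)
    + l2 * of_nat n ^ 2 / 4 * esym2 (replicate n x) = 0"
  then have "Upoly n l0 l1 l2 y = 0"
    by (simp add: Upoly_def y_def sum_list_replicate esym2_replicate power2_eq_square field_simps)
  then have "cmod y \<le> cmod (y - of_real (real n / 2))" using U by simp
  then have "2 * Re y \<le> real n / 2"
    using \<open>1 \<le> n\<close> by (subst (asm) norm_le_norm_diff_of_real_iff) auto
  then have "real n * Re x \<le> real n * (1/2)" by (simp add: y_def)
  then show False using x \<open>1 \<le> n\<close> by simp
qed

lemma Bop_nonzero_outside_unit_disc:
  assumes n: "1 \<le> n"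
    and U: "\<And>z. Upoly n l0 l1 l2 z = 0 \<Longrightarrow> cmod z \<le> cmod (z - of_nat n / 2)"
    and deg: "degree G = n" and roots: "\<And>x. poly G x = 0 \<Longrightarrow> cmod x < 1"
    and z: "1 \<le> cmod z"
  shows "Bop n l0 l1 l2 G z \<noteq> 0"
proof -
  have "G \<noteq> 0" using deg n by auto
  obtain zs where len: "length zs = degree G"
    and G: "G = smult (lead_coeff G) (\<Prod>a\<leftarrow>zs. [:-a, 1:])"
    and zs: "\<And>a. a \<in> set zs \<Longrightarrow> poly G a = 0"
    using complex_poly_factor_list[OF \<open>G \<noteq> 0\<close>] by blast
  define ws where "ws = map (\<lambda>a. z / (z - a)) zs"
  have zs_lt: "cmod a < cmod z" if "a \<in> set zs" for a
    using roots zs that z by fastforce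
  then have zs_ne: "a \<noteq> z" if "a \<in> set zs" for a using that by blast
  have "poly G z \<noteq> 0" using roots z by force
  then have "lead_coeff G * poly (\<Prod>a\<leftarrow>zs. [:-a, 1:]) z \<noteq> 0"
    by (subst (asm) G) simp
  moreover have "l0 + l1 * of_nat n / 2 * sum_list ws + l2 * of_nat n ^ 2 / 4 * esym2 ws \<noteq> 0"
  proof (rule esym2_form_nonzero_half_plane)
    show "1/2 < Re w" if "w \<in> set ws" for w
      using that zs_lt Re_div_diff_gt_half by (auto simp: ws_def)
    have "length ws = n" using len deg by (simp add: ws_def)
    then show "l0 + l1 * of_nat n / 2 * sum_list (replicate (length ws) x)
      + l2 * of_nat n ^ 2 / 4 * esym2 (replicate (length ws) x) \<noteq> 0" if "1/2 < Re x" for x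
      using Upoly_diagonal_nonzero[OF n U that] by simp
  qed
  ultimately show ?thesis
    by (subst G) (simp add: Bop_smult Bop_prod_linear[OF zs_ne] ws_def)
qed

section \<open>Bernstein-type bounds\<close>

lemma poly_eq_sum_atMost:
  fixes p :: "'a::comm_semiring_1 poly"
  assumes "degree p \<le> n"
  shows "poly p x = (\<Sum>i\<le>n. coeff p i * x ^ i)"
proof -
  have "poly p x = poly (\<Sum>i\<le>n. monom (coeff p i) i) x"
    by (simp only: poly_as_sum_of_monoms'[OF assms])
  then show ?thesis by (simp add: poly_sum poly_monom)
qed

lemma reversed_poly_eq:
  fixes P :: "'a::field poly"
  assumes "degree P \<le> n" and "u \<noteq> 0"
  shows "(\<Sum>i\<le>n. coeff P i * c ^ i * u ^ (n - i)) = u ^ n * poly P (c / u)"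
proof -
  have "(\<Sum>i\<le>n. coeff P i * c ^ i * u ^ (n - i)) = (\<Sum>i\<le>n. u ^ n * (coeff P i * (c / u) ^ i))"
  proof (intro sum.cong refl)
    fix i assume "i \<in> {..n}"
    then have "u ^ n = u ^ (n - i) * u ^ i" by (simp flip: power_add)
    then show "coeff P i * c ^ i * u ^ (n - i) = u ^ n * (coeff P i * (c / u) ^ i)"
      using \<open>u \<noteq> 0\<close> by (simp add: power_divide field_simps)
  qed
  then show ?thesis by (simp add: poly_eq_sum_atMost[OF assms(1)] sum_distrib_left)
qed

lemma norm_reversed_poly_le:
  fixes P :: "complex poly"
  assumes k: "0 < k" and deg: "degree P \<le> n"
    and bound: "\<And>w. cmod w = k \<Longrightarrow> cmod (poly P w) \<le> M"
    and y: "cmod y \<le> 1"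
  shows "cmod (\<Sum>i\<le>n. coeff P i * of_real k ^ i * y ^ (n - i)) \<le> M"
proof -
  define f where "f y = (\<Sum>i\<le>n. coeff P i * of_real k ^ i * y ^ (n - i))" for y
  have "cmod (f y) \<le> M"
  proof (rule maximum_modulus_frontier[where f = f and S = "cball 0 1"])
    show "f holomorphic_on interior (cball 0 1)"
      unfolding f_def by (intro holomorphic_intros)
    show "continuous_on (closure (cball 0 1)) f"
      unfolding f_def by (intro continuous_intros)
    fix u assume "u \<in> frontier (cball (0::complex) 1)"
    then have u: "cmod u = 1" by (simp add: frontier_cball)
    then have "cmod (of_real k / u) = k" using k by (simp add: norm_divide)
    then have "cmod (poly P (of_real k / u)) \<le> M" by (rule bound)
    moreover have "u \<noteq> 0" using u by auto
    ultimately show "cmod (f u) \<le> M"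
      using u by (simp add: f_def reversed_poly_eq[OF deg] norm_mult norm_power)
  qed (use y in auto)
  then show ?thesis by (simp add: f_def)
qed

lemma norm_coeff_le_circle_bound:
  fixes P :: "complex poly"
  assumes "0 < k" and "degree P \<le> n"
    and "\<And>w. cmod w = k \<Longrightarrow> cmod (poly P w) \<le> M"
  shows "cmod (coeff P n) * k ^ n \<le> M"
proof -
  have "(\<Sum>i\<le>n. coeff P i * of_real k ^ i * 0 ^ (n - i))
      = (\<Sum>i\<le>n. if i = n then coeff P i * of_real k ^ i else 0)"
    by (intro sum.cong) (auto simp: power_0_left)
  then have "(\<Sum>i\<le>n. coeff P i * of_real k ^ i * 0 ^ (n - i)) = coeff P n * of_real k ^ n"
    by simp
  then show ?thesis
    using norm_reversed_poly_le[OF assms, of 0] \<open>0 < k\<close> by (simp add: norm_mult norm_power)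
qed

lemma norm_poly_le_outside_circle:
  fixes P :: "complex poly"
  assumes k: "0 < k" and deg: "degree P \<le> n"
    and bound: "\<And>w. cmod w = k \<Longrightarrow> cmod (poly P w) \<le> M"
    and x: "k \<le> cmod x"
  shows "cmod (poly P x) * k ^ n \<le> M * cmod x ^ n"
proof -
  have "x \<noteq> 0" using k x by auto
  define y where "y = of_real k / x"
  have "y \<noteq> 0" and "of_real k / y = x" using \<open>x \<noteq> 0\<close> k by (simp_all add: y_def)
  moreover have "cmod y \<le> 1" using k x by (simp add: y_def norm_divide divide_le_eq_1)
  ultimately have "cmod (y ^ n * poly P x) \<le> M"
    using norm_reversed_poly_le[OF k deg bound] reversed_poly_eq[OF deg] by metis
  then have "k ^ n * cmod (poly P x) \<le> M * cmod x ^ n"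
    using \<open>x \<noteq> 0\<close> k by (simp add: y_def norm_mult norm_power norm_divide power_divide divide_le_eq)
  then show ?thesis by (simp add: mult.commute)
qed

lemma poly_diff_large_monom:
  fixes P :: "complex poly"
  assumes k: "0 < k" and deg: "degree P \<le> n"
    and bound: "\<And>w. cmod w = k \<Longrightarrow> cmod (poly P w) \<le> M"
    and large: "M < cmod \<mu> * k ^ n"
  shows "degree (P - monom \<mu> n) = n"
    and "\<And>w. poly (P - monom \<mu> n) w = 0 \<Longrightarrow> cmod w < k"
proof -
  have "coeff P n \<noteq> \<mu>"
    using norm_coeff_le_circle_bound[OF k deg bound] large by auto
  then have "coeff (P - monom \<mu> n) n \<noteq> 0" by simp
  moreover have "degree (P - monom \<mu> n) \<le> n"
    by (simp add: deg degree_diff_le degree_monom_le)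
  ultimately show "degree (P - monom \<mu> n) = n"
    by (simp add: le_antisym le_degree)
next
  fix w assume root: "poly (P - monom \<mu> n) w = 0"
  show "cmod w < k"
  proof (rule ccontr)
    assume "\<not> cmod w < k"
    then have w: "k \<le> cmod w" by simp
    have "cmod (poly P w) = cmod \<mu> * cmod w ^ n"
      using root by (simp add: poly_monom norm_mult norm_power)
    then have "cmod \<mu> * k ^ n * cmod w ^ n \<le> M * cmod w ^ n"
      using norm_poly_le_outside_circle[OF k deg bound w] by (simp add: algebra_simps)
    moreover have "0 < cmod w ^ n" using k w by (intro zero_less_power) linarith
    ultimately show False using large by simp
  qed
qed

section \<open>Dilations\<close>

text \<open>After squaring, the difference of the two sides is \<open>R - r\<close> times a quantity that
  \<open>Re (cnj x * a) \<ge> - |x| |a|\<close> bounds below by \<open>(k |x| - |a|) (\<dots>)\<close>.\<close>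

lemma norm_dilation_ratio_lt:
  fixes x a :: complex
  assumes k: "0 < k" and rk: "k \<le> r" and Rr: "r < R" and a: "cmod a < k" and x: "1 \<le> cmod x"
  shows "cmod (of_real r * x - a) * (R + k) < cmod (of_real R * x - a) * (k + r)"
proof -
  define s where "s = cmod x"
  define \<rho> where "\<rho> = cmod a"
  define X where "X = Re (cnj x * a)"
  have "k * 1 \<le> k * s" using k x by (intro mult_left_mono) (auto simp: s_def)
  then have "\<rho> < k * s" using a by (simp add: \<rho>_def)
  have sq: "(cmod (of_real t * x - a))\<^sup>2 = t\<^sup>2 * s\<^sup>2 - 2 * t * X + \<rho>\<^sup>2" for t
    unfolding s_def \<rho>_def X_def by (simp only: cmod_power2) (simp add: power2_eq_square algebra_simps)
  have "\<bar>X\<bar> \<le> s * \<rho>"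
    using abs_Re_le_cmod[of "cnj x * a"] by (simp add: X_def s_def \<rho>_def norm_mult)
  moreover have "k * k \<le> R * r" using k rk Rr by (intro mult_mono) auto
  ultimately have "- (s * \<rho>) * (R * r - k\<^sup>2) \<le> X * (R * r - k\<^sup>2)"
    by (intro mult_right_mono) (auto simp: power2_eq_square)
  moreover have "0 < (k * s - \<rho>) * ((R + r + 2 * k) * \<rho> + s * (k * R + k * r + 2 * R * r))"
    using \<open>\<rho> < k * s\<close> k rk Rr x by (intro mult_pos_pos add_nonneg_pos) (auto simp: s_def \<rho>_def)
  ultimately have E: "0 < s\<^sup>2 * k * (2 * R * r + k * R + k * r) + 2 * X * (R * r - k\<^sup>2)
      - \<rho>\<^sup>2 * (R + r + 2 * k)" (is "0 < ?E")
    by (simp add: power2_eq_square algebra_simps)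
  have "(k + r)\<^sup>2 * (cmod (of_real R * x - a))\<^sup>2 - (R + k)\<^sup>2 * (cmod (of_real r * x - a))\<^sup>2
      = (R - r) * ?E"
    unfolding sq by (simp add: power2_eq_square algebra_simps)
  also have "0 < (R - r) * ?E" using Rr E by simp
  finally have "0 < (k + r)\<^sup>2 * (cmod (of_real R * x - a))\<^sup>2 - (R + k)\<^sup>2 * (cmod (of_real r * x - a))\<^sup>2" .
  then have "(cmod (of_real r * x - a) * (R + k))\<^sup>2 < (cmod (of_real R * x - a) * (k + r))\<^sup>2"
    by (simp add: power_mult_distrib mult.commute)
  then show ?thesis
    by (rule power_less_imp_less_base) (use k rk in auto)
qed

lemma norm_poly_dilation_growth:
  fixes F :: "complex poly"
  assumes k: "0 < k" and rk: "k \<le> r" and Rr: "r < R" and x: "1 \<le> cmod x"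
    and roots: "\<And>w. poly F w = 0 \<Longrightarrow> cmod w < k" and deg: "0 < degree F"
  shows "cmod (poly F (of_real r * x)) * ((R + k) / (k + r)) ^ degree F < cmod (poly F (of_real R * x))"
proof -
  define t where "t = (R + k) / (k + r)"
  have "0 \<le> t" using k rk Rr by (simp add: t_def)
  have factor: "cmod (of_real r * x - a) * t < cmod (of_real R * x - a)" if "cmod a < k" for a
    using norm_dilation_ratio_lt[OF k rk Rr that x] k rk by (simp add: t_def field_simps)
  have F0: "F \<noteq> 0" using deg by auto
  obtain zs where len: "length zs = degree F"
    and F: "F = smult (lead_coeff F) (\<Prod>a\<leftarrow>zs. [:-a, 1:])"
    and zs: "\<And>a. a \<in> set zs \<Longrightarrow> poly F a = 0"
    using complex_poly_factor_list[OF F0] by blast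
  have prod_growth: "cmod (poly (\<Prod>a\<leftarrow>ys. [:-a, 1:]) (of_real r * x)) * t ^ length ys
      < cmod (poly (\<Prod>a\<leftarrow>ys. [:-a, 1:]) (of_real R * x))"
    if "ys \<noteq> []" "set ys \<subseteq> set zs" for ys
    using that
  proof (induction ys rule: list_nonempty_induct)
    case (single a)
    then show ?case using factor roots zs by (simp add: norm_minus_commute)
  next
    case (cons a ys)
    have poly_cons: "poly (\<Prod>a\<leftarrow>a # ys. [:-a, 1:]) y = (y - a) * poly (\<Prod>a\<leftarrow>ys. [:-a, 1:]) y" for y
      by (simp add: algebra_simps)
    have "cmod (poly (\<Prod>a\<leftarrow>a # ys. [:-a, 1:]) (of_real r * x)) * t ^ length (a # ys)
        = (cmod (of_real r * x - a) * t)
          * (cmod (poly (\<Prod>a\<leftarrow>ys. [:-a, 1:]) (of_real r * x)) * t ^ length ys)"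
      by (simp only: poly_cons norm_mult length_Cons power_Suc) (simp add: algebra_simps)
    also have "\<dots> < cmod (of_real R * x - a) * cmod (poly (\<Prod>a\<leftarrow>ys. [:-a, 1:]) (of_real R * x))"
      using cons factor roots zs \<open>0 \<le> t\<close> by (intro mult_strict_mono') auto
    also have "\<dots> = cmod (poly (\<Prod>a\<leftarrow>a # ys. [:-a, 1:]) (of_real R * x))"
      by (simp only: poly_cons norm_mult)
    finally show ?case .
  qed
  have "zs \<noteq> []" using len deg by auto
  have poly_F: "cmod (poly F y) = cmod (lead_coeff F) * cmod (poly (\<Prod>a\<leftarrow>zs. [:-a, 1:]) y)" for y
    by (subst F) (simp add: norm_mult)
  have "0 < cmod (lead_coeff F)" using F0 by simp
  then show ?thesis
    using prod_growth[OF \<open>zs \<noteq> []\<close> order_refl]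
    by (simp add: poly_F len t_def flip: mult.assoc)
qed

definition dilation_combination :: "complex poly \<Rightarrow> real \<Rightarrow> real \<Rightarrow> complex \<Rightarrow> complex poly" where
  "dilation_combination Q R r \<Phi> = pcompose Q [:0, of_real R:] + smult \<Phi> (pcompose Q [:0, of_real r:])"

lemma coeff_dilation_combination:
  "coeff (dilation_combination Q R r \<Phi>) i = coeff Q i * (of_real R ^ i + of_real r ^ i * \<Phi>)"
  by (simp add: dilation_combination_def coeff_pcompose_linear algebra_simps)

lemma poly_dilation_combination:
  "poly (dilation_combination Q R r \<Phi>) x = poly Q (of_real R * x) + \<Phi> * poly Q (of_real r * x)"
  by (simp add: dilation_combination_def poly_pcompose mult.commute)

lemma dilation_combination_diff:
  "dilation_combination (P - Q) R r \<Phi> = dilation_combination P R r \<Phi> - dilation_combination Q R r \<Phi>"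
  by (simp add: dilation_combination_def pcompose_diff smult_diff_right)

lemma dilation_combination_monom:
  "dilation_combination (monom a n) R r \<Phi> = monom (a * (of_real R ^ n + of_real r ^ n * \<Phi>)) n"
  by (rule poly_eqI) (simp add: coeff_dilation_combination coeff_monom)

lemma degree_dilation_combination:
  assumes "of_real R ^ degree Q + of_real r ^ degree Q * \<Phi> \<noteq> 0"
  shows "degree (dilation_combination Q R r \<Phi>) = degree Q"
proof (rule antisym)
  show "degree (dilation_combination Q R r \<Phi>) \<le> degree Q"
    by (rule degree_le) (simp add: coeff_dilation_combination coeff_eq_0)
  show "degree Q \<le> degree (dilation_combination Q R r \<Phi>)"
  proof (cases "Q = 0")
    case False
    then show ?thesis
      using assms by (intro le_degree) (simp add: coeff_dilation_combination)
  qed simp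
qed

lemma Bop_dilation_combination:
  "Bop n l0 l1 l2 (dilation_combination Q R r \<Phi>) z
    = Bop n l0 l1 l2 (pcompose Q [:0, of_real R:]) z + \<Phi> * Bop n l0 l1 l2 (pcompose Q [:0, of_real r:]) z"
  by (simp add: dilation_combination_def Bop_add Bop_smult)

lemma dilation_combination_nonzero_outside_unit_disc:
  fixes F :: "complex poly"
  assumes k: "0 < k" and rk: "k \<le> r" and Rr: "r < R"
    and roots: "\<And>w. poly F w = 0 \<Longrightarrow> cmod w < k" and deg: "0 < degree F"
    and \<Phi>: "cmod \<Phi> \<le> ((R + k) / (k + r)) ^ degree F" and x: "1 \<le> cmod x"
  shows "poly (dilation_combination F R r \<Phi>) x \<noteq> 0"
proof -
  have "cmod (\<Phi> * poly F (of_real r * x)) \<le> cmod (poly F (of_real r * x)) * ((R + k) / (k + r)) ^ degree F"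
    using \<Phi> by (simp add: norm_mult mult.commute[of "cmod \<Phi>"] mult_left_mono)
  also have "\<dots> < cmod (poly F (of_real R * x))"
    by (rule norm_poly_dilation_growth[OF k rk Rr x roots deg])
  finally have "poly F (of_real R * x) \<noteq> - (\<Phi> * poly F (of_real r * x))" by auto
  then show ?thesis
    by (simp add: poly_dilation_combination eq_neg_iff_add_eq_0)
qed

lemma norm_Phi_le:
  assumes "cmod \<alpha> \<le> 1" "cmod \<beta> \<le> 1" "0 < k + r" "r \<le> R"
  shows "cmod (Phi n k R r \<alpha> \<beta>) \<le> ((R + k) / (k + r)) ^ n"
proof -
  define A where "A = ((R + k) / (k + r)) ^ n"
  have "1 \<le> A" using assms by (simp add: A_def)
  have "cmod (Phi n k R r \<alpha> \<beta>) \<le> cmod \<beta> * \<bar>A - cmod \<alpha>\<bar> + cmod \<alpha>"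
    unfolding Phi_def A_def[symmetric] using norm_triangle_ineq4 by (metis norm_mult norm_of_real)
  also have "\<dots> \<le> 1 * (A - cmod \<alpha>) + cmod \<alpha>"
    using assms \<open>1 \<le> A\<close> by (intro add_mono mult_mono) auto
  finally show ?thesis by (simp add: A_def)
qed

lemma dilation_leading_factor_nonzero:
  assumes k: "0 < k" and r: "0 \<le> r" and Rr: "r < R" and n: "0 < n"
    and \<Phi>: "cmod \<Phi> \<le> ((R + k) / (k + r)) ^ n"
  shows "of_real R ^ n + of_real r ^ n * \<Phi> \<noteq> 0"
proof
  assume "of_real R ^ n + of_real r ^ n * \<Phi> = 0"
  then have "of_real R ^ n = - (of_real r ^ n * \<Phi>)" by (simp add: eq_neg_iff_add_eq_0)
  then have "R ^ n = r ^ n * cmod \<Phi>"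
    using r Rr by (metis norm_minus_cancel norm_mult norm_of_real norm_power abs_of_nonneg
        less_imp_le order.trans)
  also have "\<dots> \<le> r ^ n * ((R + k) / (k + r)) ^ n"
    using \<Phi> r by (simp add: mult_left_mono)
  also have "\<dots> = (r * (R + k) / (k + r)) ^ n" by (simp add: power_mult_distrib power_divide)
  also have "\<dots> < R ^ n"
  proof (rule power_strict_mono)
    show "r * (R + k) / (k + r) < R"
      using k r Rr by (simp add: divide_less_eq algebra_simps)
  qed (use k r Rr n in auto)
  finally show False by simp
qed

lemma norm_poly_le_SUP_circle:
  assumes "cmod w = k"
  shows "cmod (poly P w) \<le> (SUP u\<in>{u. cmod u = k}. cmod (poly P u))"
proof (rule cSUP_upper)
  have "compact ((\<lambda>u. cmod (poly P u)) ` sphere 0 k)"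
    by (intro compact_continuous_image continuous_intros) simp
  then show "bdd_above ((\<lambda>u. cmod (poly P u)) ` {u. cmod u = k})"
    by (simp add: sphere_def bounded_imp_bdd_above compact_imp_bounded)
qed (use assms in simp)

lemma SUP_circle_norm_monom:
  assumes "0 \<le> k"
  shows "(SUP u\<in>{u. cmod u = k}. cmod (poly (monom a n) u)) = cmod a * k ^ n"
proof -
  have "(SUP u\<in>{u. cmod u = k}. cmod (poly (monom a n) u)) = (SUP u\<in>{u. cmod u = k}. cmod a * k ^ n)"
    by (rule SUP_cong) (auto simp: poly_monom norm_mult norm_power)
  also have "\<dots> = cmod a * k ^ n"
    using assms by (intro cSUP_const) (auto intro!: exI[of _ "of_real k"])
  finally show ?thesis .
qed

lemma Bop_dilation_combination_monom:
  "Bop n l0 l1 l2 (dilation_combination (monom a n) R r \<Phi>) z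
    = a * (of_real (R ^ n) + of_real (r ^ n) * \<Phi>) * Bop n l0 l1 l2 (monom 1 n) z"
proof -
  have "monom (a * (of_real R ^ n + of_real r ^ n * \<Phi>)) n
      = smult (a * (of_real R ^ n + of_real r ^ n * \<Phi>)) (monom 1 n)"
    by (simp add: smult_monom)
  then show ?thesis
    by (simp only: dilation_combination_monom Bop_smult of_real_power)
qed

lemma norm_Bop_dilation_combination_le:
  assumes n: "1 \<le> n" and k: "0 < k"
    and U: "\<And>z. Upoly n l0 l1 l2 z = 0 \<Longrightarrow> cmod z \<le> cmod (z - of_nat n / 2)"
    and P: "degree P \<le> n" and rk: "k \<le> r" and Rr: "r < R"
    and \<Phi>: "cmod \<Phi> \<le> ((R + k) / (k + r)) ^ n" and z: "1 \<le> cmod z"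
  shows "cmod (Bop n l0 l1 l2 (dilation_combination P R r \<Phi>) z)
    \<le> (1 / k ^ n) * cmod (of_real (R ^ n) + of_real (r ^ n) * \<Phi>)
      * cmod (Bop n l0 l1 l2 (monom 1 n) z) * (SUP w\<in>{w. cmod w = k}. cmod (poly P w))"
proof (rule ccontr)
  define M where "M = (SUP w\<in>{w. cmod w = k}. cmod (poly P w))"
  define c where "c = of_real R ^ n + of_real r ^ n * \<Phi>"
  define B where "B = Bop n l0 l1 l2 (monom 1 n) z"
  define T where "T Q = Bop n l0 l1 l2 (dilation_combination Q R r \<Phi>) z" for Q
  define \<mu> where "\<mu> = T P / (c * B)"
  define F where "F = P - monom \<mu> n"
  have bound: "\<And>w. cmod w = k \<Longrightarrow> cmod (poly P w) \<le> M"
    unfolding M_def by (rule norm_poly_le_SUP_circle)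
  have "c \<noteq> 0"
    unfolding c_def using k rk Rr n \<Phi> by (intro dilation_leading_factor_nonzero) auto
  have "B \<noteq> 0"
    unfolding B_def using n U z
    by (intro Bop_nonzero_outside_unit_disc) (auto simp: degree_monom_eq poly_monom)
  have T_monom: "T (monom a n) = a * (c * B)" for a
    by (simp add: T_def B_def c_def Bop_dilation_combination_monom)
  assume "\<not> ?thesis"
  then have "M / k ^ n * cmod (c * B) < cmod (T P)"
    by (simp add: T_def M_def B_def c_def norm_mult mult_ac)
  then have large: "M < cmod \<mu> * k ^ n"
    using k \<open>c \<noteq> 0\<close> \<open>B \<noteq> 0\<close> by (simp add: \<mu>_def norm_divide field_simps)
  have F_deg: "degree F = n" and F_roots: "\<And>w. poly F w = 0 \<Longrightarrow> cmod w < k"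
    unfolding F_def using poly_diff_large_monom[OF k P bound large] by blast+
  have "T F = 0"
    using \<open>c \<noteq> 0\<close> \<open>B \<noteq> 0\<close>
    by (simp add: F_def T_def dilation_combination_diff Bop_diff T_monom[unfolded T_def] \<mu>_def)
  moreover have "T F \<noteq> 0"
    unfolding T_def
  proof (rule Bop_nonzero_outside_unit_disc[OF n U _ _ z])
    show "degree (dilation_combination F R r \<Phi>) = n"
      using \<open>c \<noteq> 0\<close> by (simp add: degree_dilation_combination F_deg c_def)
    show "cmod x < 1" if "poly (dilation_combination F R r \<Phi>) x = 0" for x
      using dilation_combination_nonzero_outside_unit_disc[OF k rk Rr F_roots] F_deg n \<Phi> that
      by force
  qed
  ultimately show False by contradiction
qed

theorem corollary2p3:
  fixes n :: nat and k :: real and l0 l1 l2 :: complex and P :: "complex poly"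
  assumes n: "n \<ge> 1"
    and k: "k > 0"
    and U: "\<And>z. Upoly n l0 l1 l2 z = 0 \<Longrightarrow> cmod z \<le> cmod (z - of_nat n / 2)"
    and P: "degree P \<le> n"
  shows "(\<forall>\<alpha> \<beta> R r z. cmod \<alpha> \<le> 1 \<longrightarrow> cmod \<beta> \<le> 1 \<longrightarrow> R > r \<longrightarrow> r \<ge> k \<longrightarrow> cmod z = 1 \<longrightarrow>
            cmod (Bop n l0 l1 l2 (pcompose P [:0, complex_of_real R:]) z
                  + Phi n k R r \<alpha> \<beta> * Bop n l0 l1 l2 (pcompose P [:0, complex_of_real r:]) z)
            \<le> (1 / k^n) * cmod (complex_of_real (R^n) + complex_of_real (r^n) * Phi n k R r \<alpha> \<beta>)
                * cmod (Bop n l0 l1 l2 (monom 1 n) z)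
                * (SUP w\<in>{w. cmod w = k}. cmod (poly P w)))
       \<and> (\<forall>a::complex. a \<noteq> 0 \<longrightarrow>
            (\<forall>\<alpha> \<beta> R r z. cmod \<alpha> \<le> 1 \<longrightarrow> cmod \<beta> \<le> 1 \<longrightarrow> R > r \<longrightarrow> r \<ge> k \<longrightarrow> cmod z = 1 \<longrightarrow>
              cmod (Bop n l0 l1 l2 (pcompose (monom a n) [:0, complex_of_real R:]) z
                    + Phi n k R r \<alpha> \<beta> * Bop n l0 l1 l2 (pcompose (monom a n) [:0, complex_of_real r:]) z)
              = (1 / k^n) * cmod (complex_of_real (R^n) + complex_of_real (r^n) * Phi n k R r \<alpha> \<beta>)
                  * cmod (Bop n l0 l1 l2 (monom 1 n) z)
                  * (SUP w\<in>{w. cmod w = k}. cmod (poly (monom a n) w))))"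
proof (intro conjI allI impI, goal_cases)
  case (1 \<alpha> \<beta> R r z)
  then have "cmod (Phi n k R r \<alpha> \<beta>) \<le> ((R + k) / (k + r)) ^ n"
    using k by (intro norm_Phi_le) auto
  with 1 show ?case
    using norm_Bop_dilation_combination_le[OF n k U P] by (simp add: Bop_dilation_combination)
next
  case (2 a \<alpha> \<beta> R r z)
  show ?case
    using Bop_dilation_combination_monom[of n l0 l1 l2 a R r "Phi n k R r \<alpha> \<beta>" z] k
    by (simp add: Bop_dilation_combination SUP_circle_norm_monom norm_mult)
qed

end
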